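(* Every LHS assemblage $\{\rho_{b|\theta}\}_{b\in\{0,1,\varnothing\},\theta\in[0,\pi)}$ on $\mathbb C^2$ satisfies $$|\mathsf W|\ \le\ \frac{2}{\pi}\sin\left(\frac{\pi}{2}\mathsf T\right).$$ Moreover, the bound is tight: for every $t\in[0,1]$ there is an LHS assemblage with $\mathsf t(\theta)=t$ and $\mathsf w(\theta)=\frac2\pi\sin\left(\frac{\pi}{2}t\right)$ for all $\theta\in[0,\pi)$.
   Context: An LHS assemblage with continuous input $\theta\in[0,\pi)$ is $\rho_{b|\theta}=\int_\Lambda p(b|\theta,\lambda)\,\varrho_\lambda\,d\mu(\lambda)$, where $(\Lambda,\mu)$ is a probability space, $\lambda\mapsto\varrho_\lambda$ is a measurable family of $2\times2$ density matrices, and $p(b|\theta,\lambda)$ are conditional probabilities on $b\in\{0,1,\varnothing\}$, jointly measurable in $(\theta,\lambda)$. With $Z,X$ the Pauli matrices, $\mathsf t(\theta):=\mathrm{tr}(\rho_{0|\theta}+\rho_{1|\theta})$, $\mathsf w(\theta):=\mathrm{tr}\big[(\cos\theta\,Z+\sin\theta\,X)(\rho_{0|\theta}-\rho_{1|\theta})\big]$, $\mathsf T:=\int_0^\pi\frac{d\theta}{\pi}\mathsf t(\theta)$, $\mathsf W:=\int_0^\pi\frac{d\theta}{\pi}\mathsf w(\theta)$. *)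

theory Defs
  imports "HOL-Probability.Probability"
begin

datatype outcome = B0 | B1 | Bnone

type_synonym mat2 = "complex^2^2"

definition pauliZ :: mat2 where
  "pauliZ = (\<chi> i j. if i = j then (if i = 1 then 1 else -1) else 0)"

definition pauliX :: mat2 where
  "pauliX = (\<chi> i j. if i = j then 0 else 1)"

definition density_matrix :: "mat2 \<Rightarrow> bool" where
  "density_matrix A \<longleftrightarrow>
     (\<forall>i j. A $ i $ j = cnj (A $ j $ i)) \<and>
     (\<forall>v :: complex^2. let q = (\<Sum>i\<in>UNIV. \<Sum>j\<in>UNIV. cnj (v $ i) * A $ i $ j * v $ j)
                       in Im q = 0 \<and> 0 \<le> Re q) \<and>
     trace A = 1"

definition LHS_model :: "'l measure \<Rightarrow> (real \<Rightarrow> 'l \<Rightarrow> outcome \<Rightarrow> real) \<Rightarrow> ('l \<Rightarrow> mat2) \<Rightarrow> bool" where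
  "LHS_model M p \<rho> \<longleftrightarrow>
     prob_space M \<and>
     \<rho> \<in> borel_measurable M \<and>
     (\<forall>l\<in>space M. density_matrix (\<rho> l)) \<and>
     (\<forall>b. (\<lambda>(\<theta>, l). p \<theta> l b) \<in> borel_measurable (restrict_space borel {0..<pi} \<Otimes>\<^sub>M M)) \<and>
     (\<forall>\<theta>\<in>{0..<pi}. \<forall>l\<in>space M.
        (\<forall>b. 0 \<le> p \<theta> l b) \<and> p \<theta> l B0 + p \<theta> l B1 + p \<theta> l Bnone = 1)"

definition assemblage :: "'l measure \<Rightarrow> (real \<Rightarrow> 'l \<Rightarrow> outcome \<Rightarrow> real) \<Rightarrow> ('l \<Rightarrow> mat2)
    \<Rightarrow> outcome \<Rightarrow> real \<Rightarrow> mat2" where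
  "assemblage M p \<rho> b \<theta> = (\<integral>l. p \<theta> l b *\<^sub>R \<rho> l \<partial>M)"

text \<open>t(theta) and w(theta); these traces are real (Hermitian matrices), we take Re.\<close>
definition tfun :: "'l measure \<Rightarrow> (real \<Rightarrow> 'l \<Rightarrow> outcome \<Rightarrow> real) \<Rightarrow> ('l \<Rightarrow> mat2) \<Rightarrow> real \<Rightarrow> real" where
  "tfun M p \<rho> \<theta> = Re (trace (assemblage M p \<rho> B0 \<theta> + assemblage M p \<rho> B1 \<theta>))"

definition wfun :: "'l measure \<Rightarrow> (real \<Rightarrow> 'l \<Rightarrow> outcome \<Rightarrow> real) \<Rightarrow> ('l \<Rightarrow> mat2) \<Rightarrow> real \<Rightarrow> real" where
  "wfun M p \<rho> \<theta> = Re (trace ((cos \<theta> *\<^sub>R pauliZ + sin \<theta> *\<^sub>R pauliX) **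
                        (assemblage M p \<rho> B0 \<theta> - assemblage M p \<rho> B1 \<theta>)))"

definition TT :: "'l measure \<Rightarrow> (real \<Rightarrow> 'l \<Rightarrow> outcome \<Rightarrow> real) \<Rightarrow> ('l \<Rightarrow> mat2) \<Rightarrow> real" where
  "TT M p \<rho> = (LBINT \<theta>:{0..<pi}. tfun M p \<rho> \<theta>) / pi"

definition WW :: "'l measure \<Rightarrow> (real \<Rightarrow> 'l \<Rightarrow> outcome \<Rightarrow> real) \<Rightarrow> ('l \<Rightarrow> mat2) \<Rightarrow> real" where
  "WW M p \<rho> = (LBINT \<theta>:{0..<pi}. wfun M p \<rho> \<theta>) / pi"

end

theory Submission
  imports Defs
begin

text \<open>
Write r(\<lambda>, \<theta>) = cos \<theta> z(\<lambda>) + sin \<theta> x(\<lambda>) for the component, along the measured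
direction, of the Bloch vector (z(\<lambda>), x(\<lambda>)) of \<rho>(\<lambda>); then w(\<theta>) = \<integral> (p0 - p1) r d\<mu>
and t(\<theta>) = \<integral> (p0 + p1) d\<mu>. Put \<alpha> = \<pi> T / 2 and k = cos \<alpha>. Every s \<in> [0, 1] satisfies
s |r| \<le> k s + max (|r| - k) 0. Integrated over \<theta>, the first term contributes k \<pi> T = 2 \<alpha> cos \<alpha>.
Since |r(\<lambda>, \<theta>)| \<le> |cos (\<theta> - \<phi>(\<lambda>))| for some angle \<phi>(\<lambda>), the second term contributes,
for each \<lambda>, at most the integral of max (cos u - cos \<alpha>) 0 over [-\<pi>/2, \<pi>/2], which is
2 sin \<alpha> - 2 \<alpha> cos \<alpha>. Hence \<pi> |W| \<le> 2 sin \<alpha>.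

Equality holds for pure states whose Bloch angle \<phi> is uniform on [0, \<pi>), answered with
outcome 0 if cos (\<phi> - \<theta>) > cos \<alpha>, with 1 if cos (\<phi> - \<theta>) < - cos \<alpha>, and with \<emptyset> otherwise.
\<close>

section \<open>Bloch coordinates of qubit states\<close>

definition bloch_z :: "mat2 \<Rightarrow> real" where
  "bloch_z A = Re (A$1$1) - Re (A$2$2)"

definition bloch_x :: "mat2 \<Rightarrow> real" where
  "bloch_x A = Re (A$1$2) + Re (A$2$1)"

lemma num2_one_neq_two [simp]: "(1::2) \<noteq> 2" "(2::2) \<noteq> 1"
  by auto

lemma Re_trace_pauli_mult:
  "Re (trace ((c *\<^sub>R pauliZ + s *\<^sub>R pauliX) ** A)) = c * bloch_z A + s * bloch_x A"
  by (simp add: trace_def matrix_matrix_mult_def sum_2 pauliZ_def pauliX_def bloch_z_def bloch_x_def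
      algebra_simps)

lemma density_matrixE:
  assumes "density_matrix A"
  obtains a d b where "A$1$1 = of_real a" "A$2$2 = of_real d" "A$1$2 = b" "A$2$1 = cnj b"
    "0 \<le> a" "0 \<le> d" "a + d = 1" "(cmod b)^2 \<le> a * d"
proof -
  have herm: "\<And>i j. A $ i $ j = cnj (A $ j $ i)"
    and psd: "\<And>v::complex^2. 0 \<le> Re (\<Sum>i\<in>UNIV. \<Sum>j\<in>UNIV. cnj (v $ i) * A $ i $ j * v $ j)"
    and tr: "trace A = 1"
    using assms unfolding density_matrix_def Let_def by blast+
  define a d b where "a = Re (A$1$1)" and "d = Re (A$2$2)" and "b = A$1$2"
  have A11: "A$1$1 = of_real a" using herm[of 1 1] by (simp add: a_def complex_eq_iff)
  have A22: "A$2$2 = of_real d" using herm[of 2 2] by (simp add: d_def complex_eq_iff)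
  have A21: "A$2$1 = cnj b" using herm[of 2 1] by (simp add: b_def)
  have cmod_sq: "cmod z * cmod z = Re z * Re z + Im z * Im z" for z
    by (metis cmod_power2 power2_eq_square)
  have form: "Re (\<Sum>i\<in>UNIV. \<Sum>j\<in>UNIV. cnj (v $ i) * A $ i $ j * v $ j)
      = a * (cmod (v$1))^2 + d * (cmod (v$2))^2 + 2 * Re (cnj (v$1) * b * v$2)" for v :: "complex^2"
    by (simp add: sum_2 A11 A22 A21 b_def[symmetric] cmod_sq power2_eq_square algebra_simps)
  have ad: "a + d = 1" using tr by (simp add: trace_def sum_2 A11 A22 complex_eq_iff)
  have a0: "0 \<le> a" using psd[of "vector [1, 0]"] unfolding form by simp
  have d0: "0 \<le> d" using psd[of "vector [0, 1]"] unfolding form by simp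
  have "0 \<le> a * (a * d - (cmod b)^2)"
    using psd[of "vector [b, - of_real a]"] unfolding form
    by (simp add: cmod_sq power2_eq_square algebra_simps)
  moreover have "0 \<le> d * (a * d - (cmod b)^2)"
    using psd[of "vector [- of_real d, cnj b]"] unfolding form
    by (simp add: cmod_sq power2_eq_square algebra_simps)
  ultimately have "(cmod b)^2 \<le> a * d"
    using ad a0 d0 by (cases "a > 0") (auto simp: zero_le_mult_iff)
  with A11 A22 A21 a0 d0 ad show thesis using that b_def by blast
qed

lemma density_matrix_bloch_le_1:
  assumes "density_matrix A"
  shows "(bloch_z A)^2 + (bloch_x A)^2 \<le> 1"
proof -
  obtain a d b where A: "A$1$1 = of_real a" "A$2$2 = of_real d" "A$1$2 = b" "A$2$1 = cnj b"
    and "a + d = 1" "(cmod b)^2 \<le> a * d"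
    using density_matrixE[OF assms] .
  have "(bloch_z A)^2 + (bloch_x A)^2 = (a - d)^2 + 4 * (Re b)^2"
    by (simp add: bloch_z_def bloch_x_def A power2_eq_square)
  also have "\<dots> \<le> (a - d)^2 + 4 * (a * d)"
    using \<open>(cmod b)^2 \<le> a * d\<close> cmod_power2[of b] zero_le_power2[of "Im b"] by linarith
  also have "\<dots> = (a + d)^2"
    by (simp add: power2_eq_square algebra_simps)
  finally show ?thesis using \<open>a + d = 1\<close> by simp
qed

lemma norm_vec_le_sum: "norm (x :: 'a::real_normed_vector^'n) \<le> (\<Sum>i\<in>UNIV. norm (x$i))"
  unfolding norm_vec_def by (rule L2_set_le_sum) simp

lemma norm_density_matrix_le:
  assumes "density_matrix A"
  shows "norm A \<le> 4"
proof -
  obtain a d b where A: "A$1$1 = of_real a" "A$2$2 = of_real d" "A$1$2 = b" "A$2$1 = cnj b"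
    and "0 \<le> a" "0 \<le> d" "a + d = 1" "(cmod b)^2 \<le> a * d"
    using density_matrixE[OF assms] .
  have "(cmod b)^2 \<le> 1"
    using \<open>(cmod b)^2 \<le> a * d\<close> \<open>0 \<le> a\<close> \<open>0 \<le> d\<close> \<open>a + d = 1\<close>
    using mult_le_one[of a d] by linarith
  then have "cmod b \<le> 1" by (simp add: power_le_one_iff abs_le_iff)
  have "norm A \<le> (\<Sum>i\<in>UNIV. \<Sum>j\<in>UNIV. norm (A$i$j))"
    by (rule order_trans[OF norm_vec_le_sum]) (intro sum_mono norm_vec_le_sum)
  also have "\<dots> \<le> 4"
    using \<open>cmod b \<le> 1\<close> \<open>0 \<le> a\<close> \<open>0 \<le> d\<close> \<open>a + d = 1\<close> by (simp add: sum_2 A)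
  finally show ?thesis .
qed

text \<open>The amplitude R may be negative, which is why \<phi> only needs to range over [0, \<pi>].\<close>

lemma bloch_polar:
  fixes z x :: real
  assumes "z^2 + x^2 \<le> 1"
  obtains R \<phi> where "\<bar>R\<bar> \<le> 1" "0 \<le> \<phi>" "\<phi> \<le> pi" "\<And>\<theta>. cos \<theta> * z + sin \<theta> * x = R * cos (\<theta> - \<phi>)"
proof -
  define R where "R = sqrt (z^2 + x^2)"
  have "R \<le> 1" using assms by (simp add: R_def)
  show thesis
  proof (cases "R = 0")
    case True
    then show thesis using that[of 0 0] by (simp add: R_def add_nonneg_eq_0_iff)
  next
    case False
    then have "R > 0" by (simp add: R_def order_less_le)
    have "R^2 = z^2 + x^2" by (simp add: R_def)
    have "(z/R)^2 + (x/R)^2 = (z^2 + x^2) / R^2"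
      by (simp add: power_divide add_divide_distrib)
    also have "\<dots> = 1" using \<open>R > 0\<close> by (simp flip: \<open>R^2 = z^2 + x^2\<close>)
    finally have unit: "(z/R)^2 + (x/R)^2 = 1" .
    have rotate: "cos \<theta> * z + sin \<theta> * x = S * cos (\<theta> - \<phi>)"
      if "z/S = cos \<phi>" "x/S = sin \<phi>" "S \<noteq> 0" for \<theta> S \<phi>
      using that by (simp add: cos_diff field_simps)
    show thesis
    proof (cases "0 \<le> x")
      case True
      then obtain \<phi> where "0 \<le> \<phi>" "\<phi> \<le> pi" "z/R = cos \<phi>" "x/R = sin \<phi>"
        using sincos_total_pi[of "x/R" "z/R"] unit \<open>R > 0\<close> by auto
      then show thesis using that[of R \<phi>] rotate[of R] \<open>R \<le> 1\<close> \<open>R > 0\<close> by auto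
    next
      case False
      then obtain \<phi> where "0 \<le> \<phi>" "\<phi> \<le> pi" "z/(-R) = cos \<phi>" "x/(-R) = sin \<phi>"
        using sincos_total_pi[of "x/(-R)" "z/(-R)"] unit \<open>R > 0\<close>
        by (auto simp: divide_nonpos_pos power2_eq_square)
      then show thesis using that[of "-R" \<phi>] rotate[of "-R"] \<open>R \<le> 1\<close> \<open>R > 0\<close> by auto
    qed
  qed
qed

lemma bounded_linear_Re_entry: "bounded_linear (\<lambda>A::mat2. Re (A$i$j))"
  by (intro bounded_linear_compose[OF bounded_linear_Re]
      bounded_linear_compose[OF bounded_linear_vec_nth bounded_linear_vec_nth])

lemma bounded_linear_bloch_z: "bounded_linear bloch_z"
  unfolding bloch_z_def[abs_def] by (intro bounded_linear_sub bounded_linear_Re_entry)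

lemma bounded_linear_bloch_x: "bounded_linear bloch_x"
  unfolding bloch_x_def[abs_def] by (intro bounded_linear_add bounded_linear_Re_entry)

lemma bounded_linear_Re_trace: "bounded_linear (\<lambda>A::mat2. Re (trace A))"
  unfolding trace_def by (simp add: sum_2) (intro bounded_linear_add bounded_linear_Re_entry)

lemma borel_measurable_bloch_z [measurable]: "bloch_z \<in> borel_measurable borel"
  by (intro borel_measurable_continuous_onI linear_continuous_on bounded_linear_bloch_z)

lemma borel_measurable_bloch_x [measurable]: "bloch_x \<in> borel_measurable borel"
  by (intro borel_measurable_continuous_onI linear_continuous_on bounded_linear_bloch_x)

lemma density_matrix_bloch_component_le_1:
  assumes "density_matrix A"
  shows "\<bar>cos \<theta> * bloch_z A + sin \<theta> * bloch_x A\<bar> \<le> 1"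
proof -
  obtain R \<phi> where "\<bar>R\<bar> \<le> 1" "\<And>\<theta>. cos \<theta> * bloch_z A + sin \<theta> * bloch_x A = R * cos (\<theta> - \<phi>)"
    using bloch_polar[OF density_matrix_bloch_le_1[OF assms]] by blast
  then show ?thesis
    by (simp add: abs_mult mult_le_one)
qed

section \<open>LHS assemblages\<close>

lemma (in finite_measure) integrable_const_bound_on_space:
  fixes f :: "'a \<Rightarrow> 'b::{banach, second_countable_topology}"
  assumes "f \<in> borel_measurable M" "\<And>x. x \<in> space M \<Longrightarrow> norm (f x) \<le> B"
  shows "integrable M f"
  using assms by (intro integrable_const_bound[where B=B] AE_I2) auto

lemma LHS_modelD:
  assumes "LHS_model M p \<rho>"
  shows "prob_space M" "\<rho> \<in> borel_measurable M" "\<And>l. l \<in> space M \<Longrightarrow> density_matrix (\<rho> l)"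
    "\<And>b. (\<lambda>(\<theta>, l). p \<theta> l b) \<in> borel_measurable (restrict_space borel {0..<pi} \<Otimes>\<^sub>M M)"
    "\<And>\<theta> l b. \<theta> \<in> {0..<pi} \<Longrightarrow> l \<in> space M \<Longrightarrow> 0 \<le> p \<theta> l b"
    "\<And>\<theta> l. \<theta> \<in> {0..<pi} \<Longrightarrow> l \<in> space M \<Longrightarrow> p \<theta> l B0 + p \<theta> l B1 + p \<theta> l Bnone = 1"
  using assms unfolding LHS_model_def by auto

lemma LHS_model_prob_bounds:
  assumes "LHS_model M p \<rho>" "\<theta> \<in> {0..<pi}" "l \<in> space M"
  shows "p \<theta> l b \<le> 1" "0 \<le> p \<theta> l B0 + p \<theta> l B1" "p \<theta> l B0 + p \<theta> l B1 \<le> 1"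
    "\<bar>p \<theta> l B0 - p \<theta> l B1\<bar> \<le> p \<theta> l B0 + p \<theta> l B1"
proof -
  have "0 \<le> p \<theta> l B0" "0 \<le> p \<theta> l B1" "0 \<le> p \<theta> l Bnone" "p \<theta> l B0 + p \<theta> l B1 + p \<theta> l Bnone = 1"
    using LHS_modelD(5,6)[OF assms] by auto
  then show "p \<theta> l b \<le> 1" "0 \<le> p \<theta> l B0 + p \<theta> l B1" "p \<theta> l B0 + p \<theta> l B1 \<le> 1"
    "\<bar>p \<theta> l B0 - p \<theta> l B1\<bar> \<le> p \<theta> l B0 + p \<theta> l B1"
    by (cases b; auto)+
qed

lemma LHS_model_measurable_prob:
  assumes "LHS_model M p \<rho>" "\<theta> \<in> {0..<pi}"
  shows "(\<lambda>l. p \<theta> l b) \<in> borel_measurable M"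
  using measurable_Pair2[OF LHS_modelD(4)[OF assms(1), of b], of \<theta>] assms(2) by simp

lemma LHS_model_integrable:
  assumes "LHS_model M p \<rho>" "\<theta> \<in> {0..<pi}"
  shows "integrable M (\<lambda>l. p \<theta> l b *\<^sub>R \<rho> l)"
proof -
  interpret prob_space M using LHS_modelD(1)[OF assms(1)] .
  have [measurable]: "\<rho> \<in> borel_measurable M" "(\<lambda>l. p \<theta> l b) \<in> borel_measurable M"
    using LHS_modelD(2)[OF assms(1)] LHS_model_measurable_prob[OF assms] .
  have "norm (p \<theta> l b *\<^sub>R \<rho> l) \<le> 1 * 4" if "l \<in> space M" for l
    using LHS_modelD(5)[OF assms that, of b] LHS_model_prob_bounds(1)[OF assms that, of b]
      norm_density_matrix_le[OF LHS_modelD(3)[OF assms(1) that]]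
    by (simp only: norm_scaleR) (intro mult_mono; simp)
  then show ?thesis
    by (intro integrable_const_bound_on_space) simp_all
qed

lemma bounded_linear_assemblage:
  assumes "LHS_model M p \<rho>" "\<theta> \<in> {0..<pi}" "bounded_linear f"
  shows "f (assemblage M p \<rho> b \<theta>) = (\<integral>l. p \<theta> l b * f (\<rho> l) \<partial>M)"
proof -
  interpret f: bounded_linear f by (rule assms(3))
  have "f (assemblage M p \<rho> b \<theta>) = (\<integral>l. f (p \<theta> l b *\<^sub>R \<rho> l) \<partial>M)"
    unfolding assemblage_def
    by (rule integral_bounded_linear[OF assms(3) LHS_model_integrable[OF assms(1,2)], symmetric])
  then show ?thesis by (simp add: f.scaleR)
qed

lemma tfun_eq_integral:
  assumes "LHS_model M p \<rho>" "\<theta> \<in> {0..<pi}"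
  shows "tfun M p \<rho> \<theta> = (\<integral>l. p \<theta> l B0 + p \<theta> l B1 \<partial>M)"
proof -
  have trace_\<rho>: "Re (trace (\<rho> l)) = 1" if "l \<in> space M" for l
    using LHS_modelD(3)[OF assms(1) that] by (simp add: density_matrix_def)
  interpret tr: bounded_linear "\<lambda>A::mat2. Re (trace A)" by (rule bounded_linear_Re_trace)
  have integrable: "integrable M (\<lambda>l. p \<theta> l b * Re (trace (\<rho> l)))" for b
    using integrable_bounded_linear[OF bounded_linear_Re_trace LHS_model_integrable[OF assms, of b]]
    by (simp add: tr.scaleR)
  have "tfun M p \<rho> \<theta> = Re (trace (assemblage M p \<rho> B0 \<theta>)) + Re (trace (assemblage M p \<rho> B1 \<theta>))"
    by (simp add: tfun_def trace_def sum_2)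
  also have "\<dots> = (\<integral>l. p \<theta> l B0 * Re (trace (\<rho> l)) + p \<theta> l B1 * Re (trace (\<rho> l)) \<partial>M)"
    by (simp add: bounded_linear_assemblage[OF assms bounded_linear_Re_trace] integrable)
  also have "\<dots> = (\<integral>l. p \<theta> l B0 + p \<theta> l B1 \<partial>M)"
    by (intro Bochner_Integration.integral_cong) (simp_all add: trace_\<rho>)
  finally show ?thesis .
qed

lemma wfun_eq_integral:
  assumes "LHS_model M p \<rho>" "\<theta> \<in> {0..<pi}"
  shows "wfun M p \<rho> \<theta> =
    (\<integral>l. (p \<theta> l B0 - p \<theta> l B1) * (cos \<theta> * bloch_z (\<rho> l) + sin \<theta> * bloch_x (\<rho> l)) \<partial>M)"
proof -
  let ?f = "\<lambda>A. cos \<theta> * bloch_z A + sin \<theta> * bloch_x A"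
  have f: "bounded_linear ?f"
    by (intro bounded_linear_add bounded_linear_const_mult bounded_linear_bloch_z bounded_linear_bloch_x)
  interpret f: bounded_linear ?f by (rule f)
  have integrable: "integrable M (\<lambda>l. p \<theta> l b * ?f (\<rho> l))" for b
    using integrable_bounded_linear[OF f LHS_model_integrable[OF assms, of b]] by (simp add: f.scaleR)
  have "wfun M p \<rho> \<theta> = ?f (assemblage M p \<rho> B0 \<theta>) - ?f (assemblage M p \<rho> B1 \<theta>)"
    unfolding wfun_def Re_trace_pauli_mult by (rule f.diff)
  also have "\<dots> = (\<integral>l. p \<theta> l B0 * ?f (\<rho> l) - p \<theta> l B1 * ?f (\<rho> l) \<partial>M)"
    by (simp only: bounded_linear_assemblage[OF assms f] Bochner_Integration.integral_diff[OF integrable integrable])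
  finally show ?thesis by (simp add: left_diff_distrib)
qed

section \<open>Integrals of \<pi>-periodic functions\<close>

lemma set_integral_Ico_translate:
  fixes g :: "real \<Rightarrow> real"
  shows "(LINT u:{a+c..<b+c}|lborel. g u) = (LINT u:{a..<b}|lborel. g (u + c))"
  unfolding set_lebesgue_integral_def
  by (subst lborel_integral_real_affine[where c=1 and t=c]) (simp_all add: indicator_def add.commute)

lemma set_integrable_Ico_bounded:
  fixes g :: "real \<Rightarrow> real"
  assumes "g \<in> borel_measurable borel" "\<And>u. \<bar>g u\<bar> \<le> B"
  shows "set_integrable lborel {a..<b} g"
proof -
  have "emeasure lborel {a..<b} < \<infinity>" by (cases "a \<le> b") simp_all
  then show ?thesis
    unfolding set_integrable_def
    by (intro integrableI_bounded_set_indicator[where B=B]) (use assms in auto)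
qed

lemma periodic_set_integral_shift:
  fixes g :: "real \<Rightarrow> real"
  assumes g: "g \<in> borel_measurable borel" "\<And>u. \<bar>g u\<bar> \<le> B"
    and periodic: "\<And>u. g (u + pi) = g u" and "a \<le> b" "b \<le> a + pi"
  shows "(LINT u:{a..<a+pi}|lborel. g u) = (LINT u:{b..<b+pi}|lborel. g u)"
proof -
  note integrable = set_integrable_Ico_bounded[OF g]
  have "{a..<a+pi} = {a..<b} \<union> {b..<a+pi}" "{b..<b+pi} = {b..<a+pi} \<union> {a+pi..<b+pi}"
    using \<open>a \<le> b\<close> \<open>b \<le> a + pi\<close> by auto
  moreover have "(LINT u:{a+pi..<b+pi}|lborel. g u) = (LINT u:{a..<b}|lborel. g u)"
    by (simp add: set_integral_Ico_translate periodic)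
  ultimately show ?thesis
    by (simp add: set_integral_Un integrable)
qed

lemma periodic_set_integral_window:
  fixes g :: "real \<Rightarrow> real"
  assumes "g \<in> borel_measurable borel" "\<And>u. \<bar>g u\<bar> \<le> B"
    and "\<And>u. g (u + pi) = g u" and "\<bar>a - b\<bar> \<le> pi"
  shows "(LINT u:{a..<a+pi}|lborel. g u) = (LINT u:{b..<b+pi}|lborel. g u)"
proof (cases "a \<le> b")
  case True
  then show ?thesis
    using assms(4) by (intro periodic_set_integral_shift[OF assms(1-3)]) auto
next
  case False
  then show ?thesis
    using assms(4) by (intro periodic_set_integral_shift[OF assms(1-3), symmetric]) auto
qed

lemma periodic_set_integral_translate:
  fixes g :: "real \<Rightarrow> real"
  assumes "g \<in> borel_measurable borel" "\<And>u. \<bar>g u\<bar> \<le> B"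
    and "\<And>u. g (u + pi) = g u" and "0 \<le> a" "a \<le> pi"
  shows "(LINT \<theta>:{0..<pi}|lborel. g (\<theta> - a)) = (LINT u:{-pi/2..<pi/2}|lborel. g u)"
proof -
  have "(LINT \<theta>:{0..<pi}|lborel. g (\<theta> - a)) = (LINT u:{-a..<-a+pi}|lborel. g u)"
    using set_integral_Ico_translate[of 0 "-a" pi g] by simp
  also have "\<dots> = (LINT u:{-pi/2..<-pi/2+pi}|lborel. g u)"
    by (rule periodic_set_integral_window[OF assms(1-3)]) (use assms(4,5) in auto)
  finally show ?thesis by simp
qed

lemma cos_less_cos_iff_abs_less:
  fixes u \<alpha> :: real
  assumes "\<bar>u\<bar> \<le> pi" "0 \<le> \<alpha>" "\<alpha> \<le> pi"
  shows "cos \<alpha> < cos u \<longleftrightarrow> \<bar>u\<bar> < \<alpha>"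
  using cos_mono_less_eq[of \<alpha> "\<bar>u\<bar>"] assms by (cases "u < 0") simp_all

lemma set_integral_centered_window:
  fixes f h F :: "real \<Rightarrow> real"
  assumes "0 \<le> \<alpha>" "\<alpha> \<le> pi/2" and [measurable]: "f \<in> borel_measurable borel"
    and h: "continuous_on UNIV h" and F: "\<And>u. (F has_real_derivative h u) (at u)"
    and f: "\<And>u. -pi/2 \<le> u \<Longrightarrow> u < pi/2 \<Longrightarrow> \<bar>u\<bar> \<noteq> \<alpha> \<Longrightarrow> f u = (if \<bar>u\<bar> < \<alpha> then h u else 0)"
  shows "(LINT u:{-pi/2..<pi/2}|lborel. f u) = F \<alpha> - F (-\<alpha>)"
proof -
  have [measurable]: "h \<in> borel_measurable borel"
    using h by (rule borel_measurable_continuous_onI)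
  have "AE u in lborel. u \<noteq> \<alpha> \<and> u \<noteq> -\<alpha>"
    using AE_lborel_singleton[of \<alpha>] AE_lborel_singleton[of "-\<alpha>"] by eventually_elim simp
  then have "AE u in lborel. indicator {-pi/2..<pi/2} u *\<^sub>R f u = indicator {-\<alpha>..\<alpha>} u *\<^sub>R h u"
    by eventually_elim (use assms(1,2) f in \<open>auto simp: indicator_def abs_if split: if_splits\<close>)
  then have "(LINT u:{-pi/2..<pi/2}|lborel. f u) = (LINT u|lborel. indicator {-\<alpha>..\<alpha>} u *\<^sub>R h u)"
    unfolding set_lebesgue_integral_def by (rule integral_cong_AE[rotated 2]) simp_all
  also have "\<dots> = F \<alpha> - F (-\<alpha>)"
    using assms(1) F continuous_on_subset[OF h]
    by (intro integral_FTC_atLeastAtMost)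
      (auto simp: has_real_derivative_iff_has_vector_derivative[symmetric] intro: has_field_derivative_at_within)
  finally show ?thesis .
qed

definition cos_above :: "real \<Rightarrow> real \<Rightarrow> real" where
  "cos_above c u = (if c < cos u then 1 else 0)"

definition cos_below :: "real \<Rightarrow> real \<Rightarrow> real" where
  "cos_below c u = (if cos u < -c then 1 else 0)"

lemma borel_measurable_cos_above [measurable]: "cos_above c \<in> borel_measurable borel"
  unfolding cos_above_def by measurable

lemma borel_measurable_cos_below [measurable]: "cos_below c \<in> borel_measurable borel"
  unfolding cos_below_def by measurable

lemma cos_above_below_on_window:
  assumes "0 \<le> \<alpha>" "\<alpha> \<le> pi/2" "-pi/2 \<le> u" "u < pi/2"
  shows "cos_above (cos \<alpha>) u = (if \<bar>u\<bar> < \<alpha> then 1 else 0)" "cos_below (cos \<alpha>) u = 0"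
proof -
  have "0 \<le> cos u" "0 \<le> cos \<alpha>" using assms by (auto intro!: cos_ge_zero)
  then show "cos_below (cos \<alpha>) u = 0" by (simp add: cos_below_def)
  show "cos_above (cos \<alpha>) u = (if \<bar>u\<bar> < \<alpha> then 1 else 0)"
    using cos_less_cos_iff_abs_less[of u \<alpha>] assms by (simp add: cos_above_def)
qed

lemma set_integral_cos_excess:
  assumes "0 \<le> \<alpha>" "\<alpha> \<le> pi/2"
  shows "(LINT u:{-pi/2..<pi/2}|lborel. max (\<bar>cos u\<bar> - cos \<alpha>) 0) = 2 * sin \<alpha> - 2 * \<alpha> * cos \<alpha>"
proof -
  have "(LINT u:{-pi/2..<pi/2}|lborel. max (\<bar>cos u\<bar> - cos \<alpha>) 0)
      = (sin \<alpha> - \<alpha> * cos \<alpha>) - (sin (-\<alpha>) - (-\<alpha>) * cos \<alpha>)"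
  proof (rule set_integral_centered_window[OF assms, where h="\<lambda>u. cos u - cos \<alpha>" and F="\<lambda>u. sin u - u * cos \<alpha>"])
    fix u :: real assume "-pi/2 \<le> u" "u < pi/2"
    then show "max (\<bar>cos u\<bar> - cos \<alpha>) 0 = (if \<bar>u\<bar> < \<alpha> then cos u - cos \<alpha> else 0)"
      using cos_less_cos_iff_abs_less[of u \<alpha>] assms cos_ge_zero[of u] by (auto simp: max_def)
  qed (measurable, rule continuous_on_diff[OF continuous_on_cos[OF continuous_on_id] continuous_on_const],
      auto intro!: derivative_eq_intros)
  then show ?thesis by simp
qed

lemma set_integral_cos_above_below:
  assumes "0 \<le> \<alpha>" "\<alpha> \<le> pi/2"
  shows "(LINT u:{-pi/2..<pi/2}|lborel. cos_above (cos \<alpha>) u + cos_below (cos \<alpha>) u) = 2 * \<alpha>"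
proof -
  have "(LINT u:{-pi/2..<pi/2}|lborel. cos_above (cos \<alpha>) u + cos_below (cos \<alpha>) u) = \<alpha> - (-\<alpha>)"
  proof (rule set_integral_centered_window[OF assms, where h="\<lambda>_. 1" and F="\<lambda>u. u"])
    show "(\<lambda>u. cos_above (cos \<alpha>) u + cos_below (cos \<alpha>) u) \<in> borel_measurable borel"
      by measurable
    show "((\<lambda>u. u) has_real_derivative 1) (at u)" for u :: real
      by (rule DERIV_ident)
    fix u :: real assume "-pi/2 \<le> u" "u < pi/2"
    then show "cos_above (cos \<alpha>) u + cos_below (cos \<alpha>) u = (if \<bar>u\<bar> < \<alpha> then 1 else 0)"
      by (simp add: cos_above_below_on_window[OF assms])
  qed (rule continuous_on_const)
  then show ?thesis by simp
qed

lemma set_integral_cos_above_below_cos: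
  assumes "0 \<le> \<alpha>" "\<alpha> \<le> pi/2"
  shows "(LINT u:{-pi/2..<pi/2}|lborel. (cos_above (cos \<alpha>) u - cos_below (cos \<alpha>) u) * cos u) = 2 * sin \<alpha>"
proof -
  have "(LINT u:{-pi/2..<pi/2}|lborel. (cos_above (cos \<alpha>) u - cos_below (cos \<alpha>) u) * cos u)
      = sin \<alpha> - sin (-\<alpha>)"
  proof (rule set_integral_centered_window[OF assms, where h=cos and F=sin])
    show "(\<lambda>u. (cos_above (cos \<alpha>) u - cos_below (cos \<alpha>) u) * cos u) \<in> borel_measurable borel"
      by measurable
    show "(sin has_real_derivative cos u) (at u)" for u :: real
      by (rule DERIV_sin)
    fix u :: real assume "-pi/2 \<le> u" "u < pi/2"
    then show "(cos_above (cos \<alpha>) u - cos_below (cos \<alpha>) u) * cos u = (if \<bar>u\<bar> < \<alpha> then cos u else 0)"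
      by (simp add: cos_above_below_on_window[OF assms])
  qed (rule continuous_on_cos[OF continuous_on_id])
  then show ?thesis by simp
qed

lemma cos_above_add_pi [simp]: "cos_above c (u + pi) = cos_below c u"
  by (auto simp: cos_above_def cos_below_def)

lemma cos_below_add_pi [simp]: "cos_below c (u + pi) = cos_above c u"
  by (auto simp: cos_above_def cos_below_def)

section \<open>The upper bound\<close>

lemma abs_mult_le_excess:
  fixes q s r k :: real
  assumes "\<bar>q\<bar> \<le> s" "s \<le> 1"
  shows "\<bar>q * r\<bar> \<le> k * s + max (\<bar>r\<bar> - k) 0"
proof -
  have "0 \<le> s" using assms(1) abs_ge_zero order_trans by blast
  have "\<bar>q * r\<bar> \<le> s * \<bar>r\<bar>"
    using assms(1) by (simp add: abs_mult mult_right_mono)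
  also have "\<dots> \<le> k * s + max (\<bar>r\<bar> - k) 0"
  proof (cases "\<bar>r\<bar> \<le> k")
    case True
    then show ?thesis using mult_left_mono[OF True \<open>0 \<le> s\<close>] by (simp add: mult.commute)
  next
    case False
    then have "s * (\<bar>r\<bar> - k) \<le> \<bar>r\<bar> - k" using assms by (intro mult_left_le_one_le) auto
    then show ?thesis using False by (simp add: algebra_simps)
  qed
  finally show ?thesis .
qed

lemma bloch_excess_integral_le:
  fixes z x :: real
  assumes "z^2 + x^2 \<le> 1" "0 \<le> \<alpha>" "\<alpha> \<le> pi/2"
  shows "(LINT \<theta>:{0..<pi}|lborel. max (\<bar>cos \<theta> * z + sin \<theta> * x\<bar> - cos \<alpha>) 0)
    \<le> 2 * sin \<alpha> - 2 * \<alpha> * cos \<alpha>"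
proof -
  obtain R \<phi> where R: "\<bar>R\<bar> \<le> 1" and \<phi>: "0 \<le> \<phi>" "\<phi> \<le> pi"
    and polar: "\<And>\<theta>. cos \<theta> * z + sin \<theta> * x = R * cos (\<theta> - \<phi>)"
    using bloch_polar[OF assms(1)] by blast
  define e where "e u = max (\<bar>cos u\<bar> - cos \<alpha>) 0" for u
  have [measurable]: "e \<in> borel_measurable borel" unfolding e_def by measurable
  have "0 \<le> cos \<alpha>" using assms(2,3) by (intro cos_ge_zero) auto
  then have e_bounded: "\<bar>e u\<bar> \<le> 1" for u
    unfolding e_def using abs_cos_le_one[of u] by (simp add: max_def del: abs_cos_le_one)
  have "(LINT \<theta>:{0..<pi}|lborel. max (\<bar>cos \<theta> * z + sin \<theta> * x\<bar> - cos \<alpha>) 0)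
      \<le> (LINT \<theta>:{0..<pi}|lborel. e (\<theta> - \<phi>))"
    unfolding set_lebesgue_integral_def
  proof (rule integral_mono')
    show "integrable lborel (\<lambda>\<theta>. indicator {0..<pi} \<theta> *\<^sub>R e (\<theta> - \<phi>))"
      using set_integrable_Ico_bounded[of "\<lambda>\<theta>. e (\<theta> - \<phi>)" 1] e_bounded
      unfolding set_integrable_def by simp
    fix \<theta> :: real
    have "\<bar>R * cos (\<theta> - \<phi>)\<bar> \<le> \<bar>cos (\<theta> - \<phi>)\<bar>"
      using R by (simp add: abs_mult mult_left_le_one_le)
    then have "max (\<bar>cos \<theta> * z + sin \<theta> * x\<bar> - cos \<alpha>) 0 \<le> e (\<theta> - \<phi>)"
      unfolding polar e_def by (intro max.mono) simp_all
    then show "indicator {0..<pi} \<theta> *\<^sub>R max (\<bar>cos \<theta> * z + sin \<theta> * x\<bar> - cos \<alpha>) 0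
        \<le> indicator {0..<pi} \<theta> *\<^sub>R e (\<theta> - \<phi>)"
      by (simp add: indicator_def)
    show "0 \<le> indicator {0..<pi} \<theta> *\<^sub>R e (\<theta> - \<phi>)" by (simp add: e_def)
  qed
  also have "\<dots> = (LINT u:{-pi/2..<pi/2}|lborel. e u)"
    by (rule periodic_set_integral_translate[OF _ e_bounded _ \<phi>]) (simp_all add: e_def)
  also have "\<dots> = 2 * sin \<alpha> - 2 * \<alpha> * cos \<alpha>"
    unfolding e_def by (rule set_integral_cos_excess[OF assms(2,3)])
  finally show ?thesis .
qed

definition angles :: "real measure" where
  "angles = restrict_space lborel {0..<pi}"

lemma space_angles [simp]: "space angles = {0..<pi}"
  by (simp add: angles_def space_restrict_space)

lemma integral_angles:
  fixes f :: "real \<Rightarrow> real"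
  shows "integral\<^sup>L angles f = (LINT \<theta>:{0..<pi}|lborel. f \<theta>)"
  unfolding angles_def set_lebesgue_integral_def by (rule integral_restrict_space) simp

lemma emeasure_angles: "emeasure angles {0..<pi} = ennreal pi"
  by (simp add: angles_def emeasure_restrict_space)

lemma finite_measure_angles: "finite_measure angles"
  by (rule finite_measureI) (simp add: emeasure_angles)

lemma borel_measurable_angles_trig [measurable]:
  "cos \<in> borel_measurable angles" "sin \<in> borel_measurable angles"
  unfolding angles_def by (intro measurable_restrict_space1; measurable)+

lemma LHS_model_measurable_pair [measurable]:
  assumes "LHS_model M p \<rho>"
  shows "(\<lambda>x. p (fst x) (snd x) b) \<in> borel_measurable (angles \<Otimes>\<^sub>M M)"
proof -
  have "sets angles = sets (restrict_space borel {0..<pi})"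
    unfolding angles_def by (rule sets_restrict_space_cong) simp
  then have sets_eq: "sets (angles \<Otimes>\<^sub>M M) = sets (restrict_space borel {0..<pi} \<Otimes>\<^sub>M M)"
    by (rule sets_pair_measure_cong) (rule refl)
  show ?thesis
    unfolding measurable_cong_sets[OF sets_eq refl]
    using LHS_modelD(4)[OF assms, of b] unfolding split_beta' .
qed

lemma (in prob_space) integral_in_unit_interval:
  fixes f :: "'a \<Rightarrow> real"
  assumes "f \<in> borel_measurable M" "\<And>x. x \<in> space M \<Longrightarrow> 0 \<le> f x \<and> f x \<le> 1"
  shows "0 \<le> integral\<^sup>L M f \<and> integral\<^sup>L M f \<le> 1"
proof
  show "0 \<le> integral\<^sup>L M f" using assms(2) by (intro Bochner_Integration.integral_nonneg) auto
  show "integral\<^sup>L M f \<le> 1"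
    using assms by (intro integral_le_const integrable_const_bound_on_space[where B=1] AE_I2) auto
qed

lemma LHS_model_tfun_bounds:
  assumes "LHS_model M p \<rho>" "\<theta> \<in> {0..<pi}"
  shows "0 \<le> tfun M p \<rho> \<theta> \<and> tfun M p \<rho> \<theta> \<le> 1"
proof -
  interpret prob_space M using LHS_modelD(1)[OF assms(1)] .
  have [measurable]: "(\<lambda>l. p \<theta> l b) \<in> borel_measurable M" for b
    using LHS_model_measurable_prob[OF assms] .
  show ?thesis
    unfolding tfun_eq_integral[OF assms]
    by (intro integral_in_unit_interval) (auto simp: LHS_model_prob_bounds[OF assms])
qed

lemma LHS_model_abs_wfun_le:
  assumes "LHS_model M p \<rho>" "\<theta> \<in> {0..<pi}"
  shows "\<bar>wfun M p \<rho> \<theta>\<bar> \<le> k * tfun M p \<rho> \<theta>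
    + (\<integral>l. max (\<bar>cos \<theta> * bloch_z (\<rho> l) + sin \<theta> * bloch_x (\<rho> l)\<bar> - k) 0 \<partial>M)"
proof -
  interpret prob_space M using LHS_modelD(1)[OF assms(1)] .
  define q where "q l = p \<theta> l B0 - p \<theta> l B1" for l
  define s where "s l = p \<theta> l B0 + p \<theta> l B1" for l
  define r where "r l = cos \<theta> * bloch_z (\<rho> l) + sin \<theta> * bloch_x (\<rho> l)" for l
  define e where "e l = max (\<bar>r l\<bar> - k) 0" for l
  have [measurable]: "\<rho> \<in> borel_measurable M" "(\<lambda>l. p \<theta> l b) \<in> borel_measurable M" for b
    using LHS_modelD(2)[OF assms(1)] LHS_model_measurable_prob[OF assms] .
  have r: "\<bar>r l\<bar> \<le> 1" if "l \<in> space M" for l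
    unfolding r_def by (rule density_matrix_bloch_component_le_1[OF LHS_modelD(3)[OF assms(1) that]])
  have s: "\<bar>q l\<bar> \<le> s l" "0 \<le> s l" "s l \<le> 1" if "l \<in> space M" for l
    unfolding q_def s_def using LHS_model_prob_bounds(2-4)[OF assms that] by simp_all
  have [measurable]: "q \<in> borel_measurable M" "r \<in> borel_measurable M"
    "s \<in> borel_measurable M" "e \<in> borel_measurable M"
    unfolding q_def r_def s_def e_def by measurable
  have int_s: "integrable M s"
    using s by (intro integrable_const_bound_on_space[of _ 1]) simp_all
  have "\<bar>e l\<bar> \<le> 1 + \<bar>k\<bar>" if "l \<in> space M" for l
    using r[OF that] by (auto simp: e_def max_def abs_if)
  then have int_e: "integrable M e"
    by (intro integrable_const_bound_on_space) simp_all
  have "\<bar>q l * r l\<bar> \<le> 1" if "l \<in> space M" for l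
    using s[OF that] r[OF that] by (metis abs_ge_zero abs_mult mult_le_one order_trans)
  then have int_qr: "integrable M (\<lambda>l. \<bar>q l * r l\<bar>)"
    by (intro integrable_const_bound_on_space) simp_all
  have "\<bar>wfun M p \<rho> \<theta>\<bar> = \<bar>\<integral>l. q l * r l \<partial>M\<bar>"
    by (simp add: wfun_eq_integral[OF assms] q_def r_def)
  also have "\<dots> \<le> (\<integral>l. \<bar>q l * r l\<bar> \<partial>M)"
    by (rule integral_abs_bound)
  also have "\<dots> \<le> (\<integral>l. k * s l + e l \<partial>M)"
  proof (rule integral_mono[OF int_qr])
    show "integrable M (\<lambda>l. k * s l + e l)" using int_s int_e by simp
    show "\<bar>q l * r l\<bar> \<le> k * s l + e l" if "l \<in> space M" for l
      unfolding e_def using s(1,3)[OF that] by (rule abs_mult_le_excess)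
  qed
  also have "\<dots> = k * tfun M p \<rho> \<theta> + (\<integral>l. e l \<partial>M)"
    using int_s int_e by (simp add: tfun_eq_integral[OF assms] s_def[abs_def])
  finally show ?thesis by (simp add: e_def r_def)
qed

lemma LHS_model_excess_integral_le:
  assumes "LHS_model M p \<rho>" "0 \<le> \<alpha>" "\<alpha> \<le> pi/2"
  defines "\<mu> \<equiv> \<lambda>\<theta>. \<integral>l. max (\<bar>cos \<theta> * bloch_z (\<rho> l) + sin \<theta> * bloch_x (\<rho> l)\<bar> - cos \<alpha>) 0 \<partial>M"
  shows "integrable angles \<mu>" "integral\<^sup>L angles \<mu> \<le> 2 * sin \<alpha> - 2 * \<alpha> * cos \<alpha>"
proof -
  interpret prob_space M using LHS_modelD(1)[OF assms(1)] .
  interpret angles: finite_measure angles by (rule finite_measure_angles)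
  interpret pair_sigma_finite angles M ..
  interpret product: finite_measure "angles \<Otimes>\<^sub>M M"
    by (rule finite_measure_pair_measure) unfold_locales
  define e where "e \<theta> l = max (\<bar>cos \<theta> * bloch_z (\<rho> l) + sin \<theta> * bloch_x (\<rho> l)\<bar> - cos \<alpha>) 0" for \<theta> l
  have [measurable]: "\<rho> \<in> borel_measurable M" using LHS_modelD(2)[OF assms(1)] .
  have "0 \<le> cos \<alpha>" using assms(2,3) by (intro cos_ge_zero) auto
  then have e_bounds: "0 \<le> e \<theta> l \<and> e \<theta> l \<le> 1" if "l \<in> space M" for \<theta> l
    using density_matrix_bloch_component_le_1[OF LHS_modelD(3)[OF assms(1) that], of \<theta>]
    unfolding e_def by linarith
  have integrable: "integrable (angles \<Otimes>\<^sub>M M) (case_prod e)"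
    using e_bounds unfolding e_def
    by (intro product.integrable_const_bound[where B=1] AE_I2)
      (auto simp: space_pair_measure split_beta' intro!: measurable_compose[OF measurable_fst])
  have \<mu>_eq: "\<mu> = (\<lambda>\<theta>. \<integral>l. e \<theta> l \<partial>M)" by (simp add: \<mu>_def e_def)
  show "integrable angles \<mu>"
    unfolding \<mu>_eq using integrable_fst'[OF integrable] by simp
  have "integral\<^sup>L angles \<mu> = (\<integral>l. (\<integral>\<theta>. e \<theta> l \<partial>angles) \<partial>M)"
    unfolding \<mu>_eq by (rule Fubini_integral[OF integrable, symmetric])
  also have "\<dots> \<le> (\<integral>l. 2 * sin \<alpha> - 2 * \<alpha> * cos \<alpha> \<partial>M)"
  proof (rule integral_mono')
    fix l assume l: "l \<in> space M"
    show "(\<integral>\<theta>. e \<theta> l \<partial>angles) \<le> 2 * sin \<alpha> - 2 * \<alpha> * cos \<alpha>"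
      unfolding integral_angles e_def
      by (rule bloch_excess_integral_le[OF density_matrix_bloch_le_1[OF LHS_modelD(3)[OF assms(1) l]] assms(2,3)])
    moreover have "0 \<le> (\<integral>\<theta>. e \<theta> l \<partial>angles)"
      using e_bounds[OF l] by (intro Bochner_Integration.integral_nonneg) auto
    ultimately show "0 \<le> 2 * sin \<alpha> - 2 * \<alpha> * cos \<alpha>" by linarith
  qed simp
  finally show "integral\<^sup>L angles \<mu> \<le> 2 * sin \<alpha> - 2 * \<alpha> * cos \<alpha>" by (simp add: prob_space)
qed

lemma LHS_model_measurable_tfun:
  assumes "LHS_model M p \<rho>"
  shows "tfun M p \<rho> \<in> borel_measurable angles"
proof -
  interpret prob_space M using LHS_modelD(1)[OF assms] .
  have [measurable]: "(\<lambda>x. p (fst x) (snd x) b) \<in> borel_measurable (angles \<Otimes>\<^sub>M M)" for b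
    using LHS_model_measurable_pair[OF assms] .
  have "(\<lambda>\<theta>. \<integral>l. p \<theta> l B0 + p \<theta> l B1 \<partial>M) \<in> borel_measurable angles"
    by (rule borel_measurable_lebesgue_integral) (unfold split_beta', measurable)
  then show ?thesis
    by (rule measurable_cong[THEN iffD1, rotated]) (simp add: tfun_eq_integral[OF assms])
qed

lemma LHS_model_TT_bounds:
  assumes "LHS_model M p \<rho>"
  shows "0 \<le> TT M p \<rho>" "TT M p \<rho> \<le> 1"
proof -
  interpret angles: finite_measure angles by (rule finite_measure_angles)
  have t_bounds: "0 \<le> tfun M p \<rho> \<theta> \<and> tfun M p \<rho> \<theta> \<le> 1" if "\<theta> \<in> space angles" for \<theta>
    using LHS_model_tfun_bounds[OF assms] that by simp
  have "0 \<le> integral\<^sup>L angles (tfun M p \<rho>)"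
    using t_bounds by (intro Bochner_Integration.integral_nonneg) auto
  moreover have "integral\<^sup>L angles (tfun M p \<rho>) \<le> integral\<^sup>L angles (\<lambda>_. 1)"
    using t_bounds by (intro integral_mono') auto
  moreover have "TT M p \<rho> = integral\<^sup>L angles (tfun M p \<rho>) / pi"
    by (simp add: TT_def integral_angles)
  ultimately show "0 \<le> TT M p \<rho>" "TT M p \<rho> \<le> 1"
    by (simp_all add: measure_def emeasure_angles)
qed

lemma LHS_model_abs_WW_le:
  assumes LHS: "LHS_model M p \<rho>"
  shows "\<bar>WW M p \<rho>\<bar> \<le> 2 / pi * sin (pi / 2 * TT M p \<rho>)"
proof -
  interpret angles: finite_measure angles by (rule finite_measure_angles)
  define \<alpha> where "\<alpha> = pi / 2 * TT M p \<rho>"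
  define \<mu> where "\<mu> \<theta> = (\<integral>l. max (\<bar>cos \<theta> * bloch_z (\<rho> l) + sin \<theta> * bloch_x (\<rho> l)\<bar> - cos \<alpha>) 0 \<partial>M)" for \<theta>
  have int_t: "integrable angles (tfun M p \<rho>)"
    using LHS_model_tfun_bounds[OF LHS]
    by (intro angles.integrable_const_bound_on_space[OF LHS_model_measurable_tfun[OF LHS], of 1]) auto
  have int_T: "integral\<^sup>L angles (tfun M p \<rho>) = pi * TT M p \<rho>"
    by (simp add: TT_def integral_angles)
  have \<alpha>: "0 \<le> \<alpha>" "\<alpha> \<le> pi/2"
    using LHS_model_TT_bounds[OF LHS] by (simp_all add: \<alpha>_def)
  then have "0 \<le> cos \<alpha>" by (intro cos_ge_zero) auto
  note excess = LHS_model_excess_integral_le[OF LHS \<alpha>, folded \<mu>_def]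
  have "\<bar>integral\<^sup>L angles (wfun M p \<rho>)\<bar> \<le> integral\<^sup>L angles (\<lambda>\<theta>. \<bar>wfun M p \<rho> \<theta>\<bar>)"
    by (rule integral_abs_bound)
  also have "\<dots> \<le> integral\<^sup>L angles (\<lambda>\<theta>. cos \<alpha> * tfun M p \<rho> \<theta> + \<mu> \<theta>)"
  proof (rule integral_mono')
    show "integrable angles (\<lambda>\<theta>. cos \<alpha> * tfun M p \<rho> \<theta> + \<mu> \<theta>)"
      using int_t excess(1) by simp
    fix \<theta> assume "\<theta> \<in> space angles"
    then show "\<bar>wfun M p \<rho> \<theta>\<bar> \<le> cos \<alpha> * tfun M p \<rho> \<theta> + \<mu> \<theta>"
      unfolding \<mu>_def by (intro LHS_model_abs_wfun_le[OF LHS]) simp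
    then show "0 \<le> cos \<alpha> * tfun M p \<rho> \<theta> + \<mu> \<theta>"
      by (rule order_trans[OF abs_ge_zero])
  qed
  also have "\<dots> = cos \<alpha> * (2 * \<alpha>) + integral\<^sup>L angles \<mu>"
    using int_t excess(1) by (simp add: int_T \<alpha>_def)
  also have "\<dots> \<le> 2 * sin \<alpha>"
    using excess(2) by (simp add: algebra_simps)
  finally have "\<bar>pi * WW M p \<rho>\<bar> \<le> 2 * sin \<alpha>"
    by (simp add: WW_def integral_angles)
  then show ?thesis
    by (simp add: \<alpha>_def abs_mult field_simps)
qed

section \<open>Tightness\<close>

definition bloch_amplitude :: "real \<Rightarrow> 2 \<Rightarrow> real" where
  "bloch_amplitude \<phi> i = (if i = 1 then cos (\<phi>/2) else sin (\<phi>/2))"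

definition pure_state :: "real \<Rightarrow> mat2" where
  "pure_state \<phi> = (\<chi> i j. of_real (bloch_amplitude \<phi> i * bloch_amplitude \<phi> j))"

lemma density_matrix_pure_state: "density_matrix (pure_state \<phi>)"
  unfolding density_matrix_def Let_def
proof (intro conjI allI)
  fix i j :: 2
  show "pure_state \<phi> $ i $ j = cnj (pure_state \<phi> $ j $ i)"
    by (simp add: pure_state_def mult.commute)
next
  fix v :: "complex^2"
  define w where "w = of_real (bloch_amplitude \<phi> 1) * v$1 + of_real (bloch_amplitude \<phi> 2) * v$2"
  have "(\<Sum>i\<in>UNIV. \<Sum>j\<in>UNIV. cnj (v $ i) * pure_state \<phi> $ i $ j * v $ j) = cnj w * w"
    by (simp add: sum_2 pure_state_def w_def algebra_simps)
  also have "\<dots> = of_real ((cmod w)^2)"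
    by (metis complex_norm_square mult.commute)
  finally show "Im (\<Sum>i\<in>UNIV. \<Sum>j\<in>UNIV. cnj (v $ i) * pure_state \<phi> $ i $ j * v $ j) = 0"
    "0 \<le> Re (\<Sum>i\<in>UNIV. \<Sum>j\<in>UNIV. cnj (v $ i) * pure_state \<phi> $ i $ j * v $ j)"
    by simp_all
next
  show "trace (pure_state \<phi>) = 1"
    by (simp add: trace_def sum_2 pure_state_def bloch_amplitude_def flip: of_real_mult of_real_add)
qed

lemma bloch_z_pure_state: "bloch_z (pure_state \<phi>) = cos \<phi>"
  using cos_double[of "\<phi>/2"] by (simp add: bloch_z_def pure_state_def bloch_amplitude_def power2_eq_square)

lemma bloch_x_pure_state: "bloch_x (pure_state \<phi>) = sin \<phi>"
  using sin_double[of "\<phi>/2"] by (simp add: bloch_x_def pure_state_def bloch_amplitude_def)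

lemma borel_measurable_pure_state [measurable]: "pure_state \<in> borel_measurable borel"
proof (rule borel_measurable_continuous_onI)
  have "continuous_on UNIV (\<lambda>\<phi>. bloch_amplitude \<phi> i)" for i
    by (cases "i = 1") (auto simp: bloch_amplitude_def intro!: continuous_intros)
  then show "continuous_on UNIV pure_state"
    unfolding pure_state_def by (intro continuous_intros)
qed

lemma sets_uniform_measure [simp]: "sets (uniform_measure M A) = sets M"
  by (simp add: uniform_measure_def)

lemma prob_space_uniform_measure_Ico: "a < b \<Longrightarrow> prob_space (uniform_measure lborel {a..<b::real})"
  by (intro prob_space_uniform_measure) auto

lemma integral_uniform_measure_Ico:
  fixes f :: "real \<Rightarrow> real"
  assumes [measurable]: "f \<in> borel_measurable borel" and "a < b"
  shows "integral\<^sup>L (uniform_measure lborel {a..<b}) f = (LINT x:{a..<b}|lborel. f x) / (b - a)"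
proof -
  have "uniform_measure lborel {a..<b} = density lborel (\<lambda>x. ennreal (indicator {a..<b} x / (b - a)))"
  proof -
    have "1 / ennreal (b - a) = ennreal (1 / (b - a))"
      using \<open>a < b\<close> divide_ennreal[of 1 "b - a"] by simp
    then show ?thesis
      unfolding uniform_measure_def using \<open>a < b\<close>
      by (intro density_cong) (auto simp: indicator_def)
  qed
  then have "integral\<^sup>L (uniform_measure lborel {a..<b}) f
      = (\<integral>x. (indicator {a..<b} x / (b - a)) *\<^sub>R f x \<partial>lborel)"
    using \<open>a < b\<close> by (simp add: integral_density)
  also have "\<dots> = (LINT x:{a..<b}|lborel. f x) / (b - a)"
    by (simp add: set_lebesgue_integral_def)
  finally show ?thesis .
qed

definition cone_response :: "real \<Rightarrow> real \<Rightarrow> real \<Rightarrow> outcome \<Rightarrow> real" where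
  "cone_response c \<theta> \<phi> b = (case b of
      B0 \<Rightarrow> cos_above c (\<phi> - \<theta>)
    | B1 \<Rightarrow> cos_below c (\<phi> - \<theta>)
    | Bnone \<Rightarrow> 1 - cos_above c (\<phi> - \<theta>) - cos_below c (\<phi> - \<theta>))"

lemma LHS_model_cone_response:
  assumes "0 \<le> c"
  shows "LHS_model (uniform_measure lborel {0..<pi}) (cone_response c) pure_state"
  unfolding LHS_model_def
proof (intro conjI allI ballI)
  let ?U = "uniform_measure lborel {0..<pi}"
  have sets_U: "sets ?U = sets borel" by simp
  show "prob_space ?U" by (rule prob_space_uniform_measure_Ico) simp
  show "pure_state \<in> borel_measurable ?U"
    unfolding measurable_cong_sets[OF sets_U refl] by measurable
  show "density_matrix (pure_state \<phi>)" for \<phi> by (rule density_matrix_pure_state)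
  fix b
  have [measurable]: "fst \<in> borel_measurable (restrict_space borel {0..<pi} \<Otimes>\<^sub>M ?U)"
    by (rule measurable_compose[OF measurable_fst]) (rule measurable_restrict_space1, simp)
  have [measurable]: "snd \<in> borel_measurable (restrict_space borel {0..<pi} \<Otimes>\<^sub>M ?U)"
    by (rule measurable_compose[OF measurable_snd]) (simp add: measurable_cong_sets[OF sets_U refl])
  show "(\<lambda>(\<theta>, \<phi>). cone_response c \<theta> \<phi> b) \<in> borel_measurable (restrict_space borel {0..<pi} \<Otimes>\<^sub>M ?U)"
    unfolding split_beta' cone_response_def by (cases b) simp_all
next
  fix \<theta> \<phi> b
  show "0 \<le> cone_response c \<theta> \<phi> b"
    using assms by (cases b) (auto simp: cone_response_def cos_above_def cos_below_def)
  show "cone_response c \<theta> \<phi> B0 + cone_response c \<theta> \<phi> B1 + cone_response c \<theta> \<phi> Bnone = 1"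
    by (simp add: cone_response_def)
qed

lemma cone_response_tfun:
  assumes "0 \<le> \<alpha>" "\<alpha> \<le> pi/2" "\<theta> \<in> {0..<pi}"
  shows "tfun (uniform_measure lborel {0..<pi}) (cone_response (cos \<alpha>)) pure_state \<theta> = 2 * \<alpha> / pi"
proof -
  have "0 \<le> cos \<alpha>" using assms by (intro cos_ge_zero) auto
  define g where "g u = cos_above (cos \<alpha>) u + cos_below (cos \<alpha>) u" for u
  have [measurable]: "g \<in> borel_measurable borel" unfolding g_def by measurable
  have "tfun (uniform_measure lborel {0..<pi}) (cone_response (cos \<alpha>)) pure_state \<theta>
      = (\<integral>\<phi>. g (\<phi> - \<theta>) \<partial>uniform_measure lborel {0..<pi})"
    by (simp add: tfun_eq_integral[OF LHS_model_cone_response[OF \<open>0 \<le> cos \<alpha>\<close>] assms(3)]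
        cone_response_def g_def)
  also have "\<dots> = (LINT \<phi>:{0..<pi}|lborel. g (\<phi> - \<theta>)) / pi"
    by (subst integral_uniform_measure_Ico) simp_all
  also have "(LINT \<phi>:{0..<pi}|lborel. g (\<phi> - \<theta>)) = (LINT u:{-pi/2..<pi/2}|lborel. g u)"
    by (rule periodic_set_integral_translate[where B=2])
      (use assms(3) in \<open>auto simp: g_def cos_above_def cos_below_def add.commute\<close>)
  also have "\<dots> = 2 * \<alpha>"
    unfolding g_def by (rule set_integral_cos_above_below[OF assms(1,2)])
  finally show ?thesis .
qed

lemma cone_response_wfun:
  assumes "0 \<le> \<alpha>" "\<alpha> \<le> pi/2" "\<theta> \<in> {0..<pi}"
  shows "wfun (uniform_measure lborel {0..<pi}) (cone_response (cos \<alpha>)) pure_state \<theta> = 2 * sin \<alpha> / pi"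
proof -
  have "0 \<le> cos \<alpha>" using assms by (intro cos_ge_zero) auto
  define g where "g u = (cos_above (cos \<alpha>) u - cos_below (cos \<alpha>) u) * cos u" for u
  have [measurable]: "g \<in> borel_measurable borel" unfolding g_def by measurable
  have "wfun (uniform_measure lborel {0..<pi}) (cone_response (cos \<alpha>)) pure_state \<theta>
      = (\<integral>\<phi>. g (\<phi> - \<theta>) \<partial>uniform_measure lborel {0..<pi})"
    by (simp add: wfun_eq_integral[OF LHS_model_cone_response[OF \<open>0 \<le> cos \<alpha>\<close>] assms(3)]
        cone_response_def g_def bloch_z_pure_state bloch_x_pure_state cos_diff algebra_simps)
  also have "\<dots> = (LINT \<phi>:{0..<pi}|lborel. g (\<phi> - \<theta>)) / pi"
    by (subst integral_uniform_measure_Ico) simp_all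
  also have "(LINT \<phi>:{0..<pi}|lborel. g (\<phi> - \<theta>)) = (LINT u:{-pi/2..<pi/2}|lborel. g u)"
    by (rule periodic_set_integral_translate[where B=1])
      (use assms(3) in \<open>auto simp: g_def cos_above_def cos_below_def abs_mult add.commute\<close>)
  also have "\<dots> = 2 * sin \<alpha>"
    unfolding g_def by (rule set_integral_cos_above_below_cos[OF assms(1,2)])
  finally show ?thesis .
qed

theorem mainTheorem9:
  shows "(\<forall>(M :: 'l measure) p \<rho>. LHS_model M p \<rho> \<longrightarrow>
            \<bar>WW M p \<rho>\<bar> \<le> 2 / pi * sin (pi / 2 * TT M p \<rho>)) \<and>
         (\<forall>t\<in>{0..1::real}. \<exists>(M :: real measure) p \<rho>. LHS_model M p \<rho> \<and>
            (\<forall>\<theta>\<in>{0..<pi}. tfun M p \<rho> \<theta> = t \<and> wfun M p \<rho> \<theta> = 2 / pi * sin (pi / 2 * t)))"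
proof (intro conjI allI impI ballI)
  fix M :: "'l measure" and p \<rho>
  assume "LHS_model M p \<rho>"
  then show "\<bar>WW M p \<rho>\<bar> \<le> 2 / pi * sin (pi / 2 * TT M p \<rho>)"
    by (rule LHS_model_abs_WW_le)
next
  fix t :: real
  assume "t \<in> {0..1}"
  define \<alpha> where "\<alpha> = pi / 2 * t"
  have \<alpha>: "0 \<le> \<alpha>" "\<alpha> \<le> pi/2"
    using \<open>t \<in> {0..1}\<close> by (auto simp: \<alpha>_def mult_le_cancel_left1)
  then have "0 \<le> cos \<alpha>" by (intro cos_ge_zero) auto
  let ?U = "uniform_measure lborel {0..<pi}" and ?p = "cone_response (cos \<alpha>)"
  have "LHS_model ?U ?p pure_state"
    by (rule LHS_model_cone_response[OF \<open>0 \<le> cos \<alpha>\<close>])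
  moreover have "tfun ?U ?p pure_state \<theta> = t \<and> wfun ?U ?p pure_state \<theta> = 2 / pi * sin (pi / 2 * t)"
    if "\<theta> \<in> {0..<pi}" for \<theta>
    using cone_response_tfun[OF \<alpha> that] cone_response_wfun[OF \<alpha> that] by (simp add: \<alpha>_def)
  ultimately show "\<exists>(M :: real measure) p \<rho>. LHS_model M p \<rho> \<and>
      (\<forall>\<theta>\<in>{0..<pi}. tfun M p \<rho> \<theta> = t \<and> wfun M p \<rho> \<theta> = 2 / pi * sin (pi / 2 * t))"
    by blast
qed

end
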